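(* Let $M\ge 2$ and $d\ge 2$ be integers and put $m=M^{d-1}$. Consider all integer sequences of dilations $1=s_1\le s_2\le\cdots\le s_d=m$ such that $s_i=n_i s_{i-1}$ for some positive integer $n_i$, for each $i=2,\dots,d$ (i.e. each dilation divides the next). For each such sequence, let $\bar{\mathcal d}(s_1,\dots,s_d)$ be the mean recurrent length, with period $m$, of the $d$-layer dilated RNN graph with dilations $s_1,\dots,s_d$. Then among all such sequences, $\bar{\mathcal d}$ is minimized by the sequence $s_i=M^{i-1}$, $i=1,\dots,d$.
   Context: Dilated RNN graph with dilations $s_1,\dots,s_d$ (positive integers): the directed graph with vertex set $\{x_t: t\in\mathbb Z\}\cup\{c^{(l)}_t: t\in\mathbb Z,\ 1\le l\le d\}$ and edges $x_t\to c^{(1)}_t$, $c^{(l)}_t\to c^{(l+1)}_t$ for $1\le l<d$, and $c^{(l)}_t\to c^{(l)}_{t+s_l}$ for $1\le l\le d$ (these are all the edges; in particular there is no edge $c^{(l)}_t\to c^{(l)}_{t+1}$ unless $s_l=1$). The node $x_t$ is the input at time $t$ and $c^{(d)}_t$ is the output at time $t$. For $i\in\mathbb Z$ and $n\ge1$, $\mathcal d_i(n)$ denotes the number of edges of a shortest directed path from $x_i$ to $c^{(d)}_{i+n}$. The mean recurrent length with period $m$ is $\bar{\mathcal d}=\frac1m\sum_{n=1}^{m}\max_{i\in\mathbb Z}\mathcal d_i(n)$. *)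

theory Defs
  imports Complex_Main
begin

datatype vtx = X int | C nat int  (* X t = input x_t ; C l t = c^(l)_t *)

definition drnn_edges :: "nat \<Rightarrow> (nat \<Rightarrow> nat) \<Rightarrow> (vtx \<times> vtx) set" where
  "drnn_edges d s =
     {(X t, C 1 t) | t. True}
   \<union> {(C l t, C (l+1) t) | l t. 1 \<le> l \<and> l < d}
   \<union> {(C l t, C l (t + int (s l))) | l t. 1 \<le> l \<and> l \<le> d}"

definition rec_dist :: "nat \<Rightarrow> (nat \<Rightarrow> nat) \<Rightarrow> int \<Rightarrow> nat \<Rightarrow> nat" where
  "rec_dist d s i n = (LEAST k. (X i, C d (i + int n)) \<in> drnn_edges d s ^^ k)"

definition mean_rec_len :: "nat \<Rightarrow> (nat \<Rightarrow> nat) \<Rightarrow> nat \<Rightarrow> real" where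
  "mean_rec_len d s m = (1 / real m) * (\<Sum>n = 1..m. real (SUP i::int. rec_dist d s i n))"

definition admissible_dil :: "nat \<Rightarrow> nat \<Rightarrow> (nat \<Rightarrow> nat) \<Rightarrow> bool" where
  "admissible_dil d m s \<longleftrightarrow> s 1 = 1 \<and> s d = m \<and>
     (\<forall>i\<in>{2..d}. s (i-1) \<le> s i \<and> (\<exists>n::nat. n > 0 \<and> s i = n * s (i-1)))"

end

theory Submission
  imports Defs
begin

text \<open>
  A path from layer l at time t to the output layer climbs every layer once and moves
  along layer j in steps of s j, so it covers a time offset of the form \<Sum>j. a j * s j.
  When each dilation divides the next, an offset n is covered with the fewest horizontal
  moves by writing n in the mixed radix with digits r j = s (j+1) / s j (the top digit
  being unbounded). Hence the recurrent length is d plus the digit sum of n, for every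
  start time. Over one period m = \<Prod>j. r j the digit of radix r j averages (r j - 1) / 2,
  so the mean recurrent length is d + 1/m + \<Sum>j. (r j - 1) / 2, and minimising \<Sum>j. r j
  under \<Prod>j. r j = M ^ (d - 1) is AM-GM, with the minimum at r j = M.
\<close>

fun digit_sum :: "nat list \<Rightarrow> nat \<Rightarrow> nat" where
  "digit_sum [] q = q"
| "digit_sum (r # rs) q = q mod r + digit_sum rs (q div r)"

lemma digit_sum_0 [simp]: "digit_sum rs 0 = 0"
  by (induction rs) auto

lemma digit_sum_Suc_le: "digit_sum rs (Suc q) \<le> Suc (digit_sum rs q)"
proof (induction rs arbitrary: q)
  case Nil
  then show ?case by simp
next
  case (Cons r rs)
  show ?case
  proof (cases "Suc q mod r = 0")
    case True
    then have "Suc q div r = Suc (q div r)" by (simp add: div_Suc)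
    then show ?thesis using Cons.IH[of "q div r"] True by simp
  next
    case False
    then have "Suc q div r = q div r" and "Suc q mod r = Suc (q mod r)"
      by (simp_all add: div_Suc mod_Suc split: if_splits)
    then show ?thesis by simp
  qed
qed

lemma digit_sum_prod_list: "(\<And>r. r \<in> set rs \<Longrightarrow> 0 < r) \<Longrightarrow> digit_sum rs (prod_list rs) = 1"
  by (induction rs) auto

lemma sum_digit_sum_prod_list:
  "2 * (\<Sum>q < prod_list rs. digit_sum rs q) + prod_list rs * length rs = prod_list rs * sum_list rs"
proof (induction rs)
  case Nil
  then show ?case by simp
next
  case (Cons r rs)
  define P where "P = prod_list rs"
  define S where "S = (\<Sum>q<P. digit_sum rs q)"
  have blocks: "(\<Sum>q < P * r. digit_sum (r # rs) q) = P * (\<Sum>a<r. a) + r * S"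
  proof -
    have "(\<Sum>q < P * r. digit_sum (r # rs) q) = (\<Sum>b<P. \<Sum>a<r. digit_sum (r # rs) (b * r + a))"
      by (simp add: sum.nat_group[symmetric] sum.atLeastLessThan_shift_0 atLeast0LessThan add.commute)
    also have "\<dots> = (\<Sum>b<P. \<Sum>a<r. a + digit_sum rs b)"
      by (intro sum.cong) auto
    finally show ?thesis by (simp add: sum.distrib sum_distrib_left S_def mult.commute)
  qed
  have gauss: "2 * (\<Sum>a<r. a) + r = r * r"
    by (induction r) (auto simp: algebra_simps)
  have "2 * (\<Sum>q < prod_list (r # rs). digit_sum (r # rs) q) + prod_list (r # rs) * length (r # rs)
        = P * (2 * (\<Sum>a<r. a) + r) + r * (2 * S + P * length rs)"
  proof -
    have "prod_list (r # rs) = P * r" by (simp add: P_def)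
    then show ?thesis by (simp only: blocks length_Cons) (simp add: algebra_simps)
  qed
  also have "\<dots> = prod_list (r # rs) * sum_list (r # rs)"
    using Cons.IH gauss by (simp add: P_def S_def algebra_simps)
  finally show ?case .
qed

lemma drnn_edge_from_X: "(X t, w) \<in> drnn_edges d s \<longleftrightarrow> w = C 1 t"
  by (auto simp: drnn_edges_def)

lemma drnn_edge_from_C:
  "(C l t, w) \<in> drnn_edges d s \<longleftrightarrow>
     1 \<le> l \<and> (l < d \<and> w = C (Suc l) t \<or> l \<le> d \<and> w = C l (t + int (s l)))"
  by (auto simp: drnn_edges_def)

definition dvd_chain_dil :: "nat \<Rightarrow> (nat \<Rightarrow> nat) \<Rightarrow> bool" where
  "dvd_chain_dil d s \<longleftrightarrow> (\<forall>l\<in>{1..d}. 0 < s l) \<and> (\<forall>l\<in>{1..<d}. s l dvd s (Suc l))"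

lemma admissible_dil_dvd_chain:
  assumes "admissible_dil d m s" shows "dvd_chain_dil d s"
proof -
  have "0 < s l" if "1 \<le> l" "l \<le> d" for l
    using that
  proof (induction l)
    case (Suc l)
    then show ?case
      using assms by (cases "l = 0") (auto simp: admissible_dil_def dest!: bspec[of _ _ "Suc l"])
  qed simp
  moreover have "s l dvd s (Suc l)" if "1 \<le> l" "l < d" for l
    using assms that by (auto simp: admissible_dil_def dest!: bspec[of _ _ "Suc l"])
  ultimately show ?thesis by (simp add: dvd_chain_dil_def)
qed

definition dil_ratios :: "(nat \<Rightarrow> nat) \<Rightarrow> nat \<Rightarrow> nat \<Rightarrow> nat list" where
  "dil_ratios s l d = map (\<lambda>j. s (Suc j) div s j) [l..<d]"

lemma dil_ratios_Cons: "l < d \<Longrightarrow> dil_ratios s l d = s (Suc l) div s l # dil_ratios s (Suc l) d"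
  by (simp add: dil_ratios_def upt_conv_Cons)

lemma dil_ratios_Nil: "d \<le> l \<Longrightarrow> dil_ratios s l d = []"
  by (simp add: dil_ratios_def)

lemma dvd_chain_dil_step:
  assumes "dvd_chain_dil d s" "1 \<le> l" "l < d"
  shows "s (Suc l) = (s (Suc l) div s l) * s l" and "0 < s (Suc l) div s l"
proof -
  have "0 < s l" "0 < s (Suc l)" "s l dvd s (Suc l)"
    using assms by (auto simp: dvd_chain_dil_def)
  then show "s (Suc l) = (s (Suc l) div s l) * s l" "0 < s (Suc l) div s l"
    by (auto elim!: dvdE)
qed

lemma prod_list_dil_ratios:
  assumes "dvd_chain_dil d s" "1 \<le> l" "l \<le> d"
  shows "prod_list (dil_ratios s l d) * s l = s d"
  using assms(2,3)
proof (induction "d - l" arbitrary: l)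
  case (Suc n)
  then have "l < d" by simp
  define r where "r = s (Suc l) div s l"
  have step: "s (Suc l) = r * s l"
    using dvd_chain_dil_step(1)[OF assms(1) Suc.prems(1) \<open>l < d\<close>] by (simp add: r_def)
  have "prod_list (dil_ratios s l d) * s l = prod_list (dil_ratios s (Suc l) d) * s (Suc l)"
    using \<open>l < d\<close> by (simp add: dil_ratios_Cons r_def[symmetric] step)
  also have "\<dots> = s d"
    using Suc by simp
  finally show ?case .
qed (simp add: dil_ratios_Nil)

lemma drnn_horizontal_path:
  "1 \<le> l \<Longrightarrow> l \<le> d \<Longrightarrow> (C l t, C l (t + int (k * s l))) \<in> drnn_edges d s ^^ k"
proof (induction k)
  case (Suc k)
  then have "(C l (t + int (k * s l)), C l (t + int (Suc k * s l))) \<in> drnn_edges d s"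
    by (simp add: drnn_edge_from_C algebra_simps)
  with Suc show ?case by auto
qed simp

lemma drnn_path_digit_sum:
  assumes "dvd_chain_dil d s" "1 \<le> l" "l \<le> d"
  shows "(C l t, C d (t + int (q * s l))) \<in> drnn_edges d s ^^ ((d - l) + digit_sum (dil_ratios s l d) q)"
  using assms(2,3)
proof (induction "d - l" arbitrary: l t q)
  case 0
  then show ?case using drnn_horizontal_path by (simp add: dil_ratios_Nil)
next
  case (Suc n)
  then have "l < d" by simp
  define r where "r = s (Suc l) div s l"
  have step: "s (Suc l) = r * s l"
    using dvd_chain_dil_step(1)[OF assms(1) Suc.prems(1) \<open>l < d\<close>] by (simp add: r_def)
  define t' where "t' = t + int (q mod r * s l)"
  have "(C l t, C l t') \<in> drnn_edges d s ^^ (q mod r)"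
    unfolding t'_def using Suc.prems by (rule drnn_horizontal_path)
  moreover have "(C l t', C (Suc l) t') \<in> drnn_edges d s"
    using Suc.prems \<open>l < d\<close> by (simp add: drnn_edge_from_C)
  ultimately have climb: "(C l t, C (Suc l) t') \<in> drnn_edges d s ^^ Suc (q mod r)"
    by (rule relpow_Suc_I)
  have "(C (Suc l) t', C d (t' + int (q div r * s (Suc l))))
      \<in> drnn_edges d s ^^ ((d - Suc l) + digit_sum (dil_ratios s (Suc l) d) (q div r))"
    by (rule Suc.hyps(1)) (use Suc.hyps(2) \<open>l < d\<close> in auto)
  moreover have "t' + int (q div r * s (Suc l)) = t + int (q * s l)"
  proof -
    have "q mod r * s l + q div r * s (Suc l) = q * s l"
      unfolding step by (metis add_mult_distrib div_mult_mod_eq mult.assoc add.commute)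
    from arg_cong[OF this, of int] show ?thesis by (simp add: t'_def)
  qed
  ultimately have "(C (Suc l) t', C d (t + int (q * s l)))
      \<in> drnn_edges d s ^^ ((d - Suc l) + digit_sum (dil_ratios s (Suc l) d) (q div r))"
    by simp
  with climb have path: "(C l t, C d (t + int (q * s l)))
      \<in> drnn_edges d s ^^ (Suc (q mod r) + ((d - Suc l) + digit_sum (dil_ratios s (Suc l) d) (q div r)))"
    unfolding relpow_add by blast
  have len: "Suc (q mod r) + ((d - Suc l) + digit_sum (dil_ratios s (Suc l) d) (q div r))
      = (d - l) + digit_sum (dil_ratios s l d) q"
    using \<open>l < d\<close> by (simp add: dil_ratios_Cons r_def[symmetric])
  from path show ?case unfolding len .
qed

text \<open>
  Backward induction along the path: divisibility of the remaining offset by the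
  dilation of the current layer is part of the invariant.
\<close>

lemma drnn_path_length_ge:
  assumes "dvd_chain_dil d s"
  shows "(C l t, C d y) \<in> drnn_edges d s ^^ k \<Longrightarrow> 1 \<le> l \<Longrightarrow> l \<le> d \<Longrightarrow>
    \<exists>q. y = t + int (q * s l) \<and> (d - l) + digit_sum (dil_ratios s l d) q \<le> k"
proof (induction k arbitrary: l t)
  case 0
  then show ?case by (auto simp: dil_ratios_Nil)
next
  case (Suc k)
  then obtain w where edge: "(C l t, w) \<in> drnn_edges d s" and path: "(w, C d y) \<in> drnn_edges d s ^^ k"
    by (meson relpow_Suc_D2)
  from edge consider "l < d" "w = C (Suc l) t" | "w = C l (t + int (s l))"
    by (auto simp: drnn_edge_from_C)
  then show ?case
  proof cases
    case 1
    define r where "r = s (Suc l) div s l"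
    have step: "s (Suc l) = r * s l" and "0 < r"
      using dvd_chain_dil_step[OF assms Suc.prems(2) \<open>l < d\<close>] by (simp_all add: r_def)
    obtain q where q: "y = t + int (q * s (Suc l))"
      and bound: "(d - Suc l) + digit_sum (dil_ratios s (Suc l) d) q \<le> k"
      using Suc.IH[of "Suc l" t] path 1 by auto
    have "y = t + int (q * r * s l)"
      using q by (simp add: step mult.assoc)
    moreover have "(d - l) + digit_sum (dil_ratios s l d) (q * r) \<le> Suc k"
      using bound \<open>l < d\<close> \<open>0 < r\<close> by (simp add: dil_ratios_Cons r_def[symmetric] Suc_diff_Suc)
    ultimately show ?thesis by blast
  next
    case 2
    obtain q where q: "y = t + int (s l) + int (q * s l)"
      and bound: "(d - l) + digit_sum (dil_ratios s l d) q \<le> k"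
      using Suc.IH[of l "t + int (s l)"] path 2 Suc.prems by auto
    have "y = t + int (Suc q * s l)" using q by simp
    moreover have "(d - l) + digit_sum (dil_ratios s l d) (Suc q) \<le> Suc k"
      using bound digit_sum_Suc_le[of "dil_ratios s l d" q] by simp
    ultimately show ?thesis by blast
  qed
qed

lemma rec_dist_eq_digit_sum:
  assumes chain: "dvd_chain_dil d s" and "1 \<le> d" and "s 1 = 1"
  shows "rec_dist d s i n = d + digit_sum (dil_ratios s 1 d) n"
proof -
  let ?E = "drnn_edges d s" and ?D = "digit_sum (dil_ratios s 1 d) n"
  have "(X i, C 1 i) \<in> ?E"
    by (simp add: drnn_edge_from_X)
  moreover have "(C 1 i, C d (i + int n)) \<in> ?E ^^ ((d - 1) + ?D)"
    using drnn_path_digit_sum[OF chain order_refl \<open>1 \<le> d\<close>, of i n] \<open>s 1 = 1\<close> by simp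
  ultimately have "(X i, C d (i + int n)) \<in> ?E ^^ Suc ((d - 1) + ?D)"
    by (rule relpow_Suc_I2)
  then have reach: "(X i, C d (i + int n)) \<in> ?E ^^ (d + ?D)"
    using \<open>1 \<le> d\<close> by simp
  have "d + ?D \<le> k" if path: "(X i, C d (i + int n)) \<in> ?E ^^ k" for k
  proof (cases k)
    case (Suc k')
    with path obtain w where "(X i, w) \<in> ?E" and "(w, C d (i + int n)) \<in> ?E ^^ k'"
      by (meson relpow_Suc_D2)
    then have "(C 1 i, C d (i + int n)) \<in> ?E ^^ k'"
      by (simp add: drnn_edge_from_X)
    then obtain q where "i + int n = i + int (q * s 1)" and "(d - 1) + digit_sum (dil_ratios s 1 d) q \<le> k'"
      using drnn_path_length_ge[OF chain _ order_refl \<open>1 \<le> d\<close>] by blast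
    with \<open>s 1 = 1\<close> Suc \<open>1 \<le> d\<close> show ?thesis by simp
  qed (use path in auto)
  with reach show ?thesis
    unfolding rec_dist_def by (rule Least_equality)
qed

lemma mean_rec_len_eq:
  assumes chain: "dvd_chain_dil d s" and "1 \<le> d" and "s 1 = 1"
  shows "mean_rec_len d s (s d)
           = real d + 1 / real (s d) + (real (sum_list (dil_ratios s 1 d)) - real (d - 1)) / 2"
proof -
  let ?rs = "dil_ratios s 1 d" and ?m = "s d"
  define S where "S = (\<Sum>n = 1..?m. digit_sum ?rs n)"
  have m: "prod_list ?rs = ?m"
    using prod_list_dil_ratios[OF chain order_refl \<open>1 \<le> d\<close>] \<open>s 1 = 1\<close> by simp
  have "0 < ?m"
    using chain \<open>1 \<le> d\<close> by (simp add: dvd_chain_dil_def)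
  have pos: "0 < r" if "r \<in> set ?rs" for r
    using that dvd_chain_dil_step(2)[OF chain] by (auto simp: dil_ratios_def)
  have "S = (\<Sum>n \<le> ?m. digit_sum ?rs n)"
    by (simp add: S_def sum_shift_lb_Suc0_0 atLeast0AtMost)
  also have "\<dots> = (\<Sum>q < ?m. digit_sum ?rs q) + 1"
    using digit_sum_prod_list[of ?rs, OF pos] m by (simp flip: lessThan_Suc_atMost)
  finally have "2 * S + ?m * (d - 1) = 2 + ?m * sum_list ?rs"
    using sum_digit_sum_prod_list[of ?rs] m by (simp add: dil_ratios_def)
  then have "2 * real S + real ?m * real (d - 1) = 2 + real ?m * real (sum_list ?rs)"
    by (metis of_nat_add of_nat_mult of_nat_numeral)
  moreover have "mean_rec_len d s ?m = real d + real S / real ?m"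
    using \<open>0 < ?m\<close> rec_dist_eq_digit_sum[OF assms]
    by (simp add: mean_rec_len_def S_def sum.distrib field_simps)
  ultimately show ?thesis
    using \<open>0 < ?m\<close> by (simp add: field_simps)
qed

lemma card_mult_le_sum_of_prod_eq_power:
  fixes x :: "'a \<Rightarrow> real" and c :: real
  assumes "finite A" and pos: "\<And>j. j \<in> A \<Longrightarrow> 0 < x j" and "0 < c"
    and prod: "(\<Prod>j\<in>A. x j) = c ^ card A"
  shows "card A * c \<le> (\<Sum>j\<in>A. x j)"
proof -
  have "(\<Sum>j\<in>A. ln (x j / c)) = (\<Sum>j\<in>A. ln (x j) - ln c)"
    using pos \<open>0 < c\<close> by (intro sum.cong refl) (simp add: ln_div less_imp_neq[symmetric])
  also have "\<dots> = ln (\<Prod>j\<in>A. x j) - card A * ln c"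
    using pos \<open>finite A\<close> by (simp add: sum_subtractf ln_prod less_imp_neq[symmetric])
  also have "\<dots> = 0"
    using \<open>0 < c\<close> by (simp add: prod ln_realpow)
  finally have "0 \<le> (\<Sum>j\<in>A. x j / c - 1)"
    by (metis pos \<open>0 < c\<close> ln_le_minus_one divide_pos_pos sum_mono)
  then have "0 \<le> (\<Sum>j\<in>A. x j) / c - card A"
    by (simp add: sum_subtractf sum_divide_distrib)
  then show ?thesis
    using \<open>0 < c\<close> by (simp add: field_simps)
qed

lemma length_mult_le_sum_list:
  fixes rs :: "nat list"
  assumes pos: "\<And>r. r \<in> set rs \<Longrightarrow> 0 < r" and "0 < M" and prod: "prod_list rs = M ^ length rs"
  shows "length rs * M \<le> sum_list rs"
proof -
  let ?A = "{0..<length rs}" and ?x = "\<lambda>i. real (rs ! i)"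
  have "(\<Prod>i\<in>?A. ?x i) = real M ^ card ?A"
    using prod by (simp add: prod.list_conv_set_nth flip: of_nat_prod of_nat_power)
  then have "real (card ?A) * real M \<le> (\<Sum>i\<in>?A. ?x i)"
    using pos \<open>0 < M\<close> by (intro card_mult_le_sum_of_prod_eq_power) auto
  then show ?thesis
    by (simp add: sum.list_conv_set_nth flip: of_nat_sum of_nat_mult)
qed

lemma sum_dil_ratios_ge:
  assumes adm: "admissible_dil d (M ^ (d - 1)) s" and "0 < M" and "1 \<le> d"
  shows "(d - 1) * M \<le> sum_list (dil_ratios s 1 d)"
proof -
  have chain: "dvd_chain_dil d s"
    using adm by (rule admissible_dil_dvd_chain)
  have "prod_list (dil_ratios s 1 d) = M ^ length (dil_ratios s 1 d)"
    using prod_list_dil_ratios[OF chain order_refl \<open>1 \<le> d\<close>] adm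
    by (simp add: dil_ratios_def admissible_dil_def)
  then have "length (dil_ratios s 1 d) * M \<le> sum_list (dil_ratios s 1 d)"
    using dvd_chain_dil_step(2)[OF chain] \<open>0 < M\<close>
    by (intro length_mult_le_sum_list) (auto simp: dil_ratios_def)
  then show ?thesis
    by (simp add: dil_ratios_def)
qed

lemma admissible_dil_powers:
  assumes "0 < M" shows "admissible_dil d (M ^ (d - 1)) (\<lambda>i. M ^ (i - 1))"
  unfolding admissible_dil_def
proof (intro conjI ballI)
  fix i assume i: "i \<in> {2..d}"
  show "M ^ (i - 1 - 1) \<le> M ^ (i - 1)"
    using \<open>0 < M\<close> by (intro power_increasing) auto
  have "i - 1 = Suc (i - 1 - 1)"
    using i by auto
  then show "\<exists>n>0. M ^ (i - 1) = n * M ^ (i - 1 - 1)"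
    using \<open>0 < M\<close> by (metis power_Suc)
qed simp_all

lemma dil_ratios_powers:
  assumes "0 < M" shows "dil_ratios (\<lambda>i. M ^ (i - 1)) 1 d = replicate (d - 1) M"
proof -
  have "map (\<lambda>j. M ^ (Suc j - 1) div M ^ (j - 1)) [1..<d] = map (\<lambda>_. M) [1..<d]"
  proof (rule map_cong[OF refl])
    fix j assume "j \<in> set [1..<d]"
    then have "M ^ (Suc j - 1) = M * M ^ (j - 1)"
      by (simp flip: power_Suc)
    then show "M ^ (Suc j - 1) div M ^ (j - 1) = M"
      using \<open>0 < M\<close> by simp
  qed
  then show ?thesis
    by (simp add: dil_ratios_def map_replicate_const)
qed

theorem theorem1:
  fixes M d :: nat
  assumes "M \<ge> 2" and "d \<ge> 2"
  shows "admissible_dil d (M ^ (d-1)) (\<lambda>i. M ^ (i-1)) \<and>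
         (\<forall>s. admissible_dil d (M ^ (d-1)) s \<longrightarrow>
              mean_rec_len d (\<lambda>i. M ^ (i-1)) (M ^ (d-1)) \<le> mean_rec_len d s (M ^ (d-1)))"
proof (intro conjI allI impI)
  let ?p = "\<lambda>i. M ^ (i - 1)"
  have "0 < M" and "1 \<le> d" using assms by auto
  show adm_p: "admissible_dil d (M ^ (d - 1)) ?p"
    using \<open>0 < M\<close> by (rule admissible_dil_powers)
  fix s assume adm_s: "admissible_dil d (M ^ (d - 1)) s"
  have "s 1 = 1" and "s d = M ^ (d - 1)"
    using adm_s by (auto simp: admissible_dil_def)
  have "sum_list (dil_ratios ?p 1 d) = (d - 1) * M"
    using dil_ratios_powers[OF \<open>0 < M\<close>, of d] by (simp add: sum_list_replicate)
  also have "\<dots> \<le> sum_list (dil_ratios s 1 d)"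
    using adm_s \<open>0 < M\<close> \<open>1 \<le> d\<close> by (rule sum_dil_ratios_ge)
  finally show "mean_rec_len d ?p (M ^ (d - 1)) \<le> mean_rec_len d s (M ^ (d - 1))"
    using mean_rec_len_eq[OF admissible_dil_dvd_chain[OF adm_p] \<open>1 \<le> d\<close>]
      mean_rec_len_eq[OF admissible_dil_dvd_chain[OF adm_s] \<open>1 \<le> d\<close> \<open>s 1 = 1\<close>] \<open>s d = _\<close>
    by simp
qed

end
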